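(* Let $\mathbb{P}$ be a Pawlikowski lattice satisfying $\mathsf{S}_1(\mathbb{V}_1,\mathbb{V}_1)$. Then Player I does not have a winning strategy in the game $\mathsf{G}_1(\mathbb{V}_1,\mathbb{V}_1)$.
   Context: A lattice is a poset where any two elements have a supremum and an infimum; it is bounded if it has a minimum $0$ and a maximum $1$. A prime element is $q\neq 1$ with: $a\wedge b\leq q$ implies $a\leq q$ or $b\leq q$. Enough prime elements: whenever $a\not\leq b$ there is a prime $q$ with $b\leq q$, $a\not\leq q$. A Pawlikowski lattice is a bounded lattice with enough prime elements such that $(\sup A)\wedge b=\sup\{a\wedge b:a\in A\}$ for every $b\in\mathbb{P}$ and every subset $A\subseteq\mathbb{P}$ having a supremum. $\mathbb{V}_1$ is the family of subsets $A\subseteq\mathbb{P}$ with $\sup A=1$. $\mathsf{S}_1(\mathbb{V}_1,\mathbb{V}_1)$: for every sequence $(A_n)_{n\in\omega}$ in $\mathbb{V}_1$ there are $a_n\in A_n$ with $\sup\{a_n:n\in\omega\}=1$. The game $\mathsf{G}_1(\mathbb{V}_1,\mathbb{V}_1)$: in inning $n\in\omega$ Player I plays $A_n\in\mathbb{V}_1$ and Player II picks $a_n\in A_n$; Player II wins if $\sup\{a_n:n\in\omega\}=1$, otherwise Player I wins. A strategy for Player I assigns Player I's move to each finite sequence of Player II's previous moves; it is winning if Player I wins every play following it. *)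

theory Defs
  imports Main
begin

text \<open>Supremum in the poset sense (the lattice need not be complete).\<close>
definition is_sup :: "'a::order set \<Rightarrow> 'a \<Rightarrow> bool" where
  "is_sup A s \<longleftrightarrow> (\<forall>a\<in>A. a \<le> s) \<and> (\<forall>u. (\<forall>a\<in>A. a \<le> u) \<longrightarrow> s \<le> u)"

definition has_sup :: "'a::order set \<Rightarrow> bool" where
  "has_sup A \<longleftrightarrow> (\<exists>s. is_sup A s)"

definition prime_elem :: "'a::bounded_lattice \<Rightarrow> bool" where
  "prime_elem q \<longleftrightarrow> q \<noteq> top \<and> (\<forall>a b. inf a b \<le> q \<longrightarrow> a \<le> q \<or> b \<le> q)"

definition enough_primes :: "'a::bounded_lattice itself \<Rightarrow> bool" where
  "enough_primes _ \<longleftrightarrow>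
     (\<forall>a b::'a. \<not> a \<le> b \<longrightarrow> (\<exists>q. prime_elem q \<and> b \<le> q \<and> \<not> a \<le> q))"

definition pawlikowski :: "'a::bounded_lattice itself \<Rightarrow> bool" where
  "pawlikowski T \<longleftrightarrow> enough_primes T \<and>
     (\<forall>(A::'a set) s b. is_sup A s \<longrightarrow> is_sup ((\<lambda>a. inf a b) ` A) (inf s b))"

definition V1 :: "'a::bounded_lattice set set" where
  "V1 = {A. is_sup A top}"

definition S1_V1_V1 :: "'a::bounded_lattice itself \<Rightarrow> bool" where
  "S1_V1_V1 _ \<longleftrightarrow>
     (\<forall>As :: nat \<Rightarrow> 'a set. (\<forall>n. As n \<in> V1) \<longrightarrow>
        (\<exists>a. (\<forall>n. a n \<in> As n) \<and> is_sup (range a) top))"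

text \<open>A strategy for Player I in G_1(V_1,V_1): to each finite sequence of Player II's
  previous moves it assigns a move of Player I, i.e. a member of V_1.\<close>
definition strategy_I :: "('a::bounded_lattice list \<Rightarrow> 'a set) \<Rightarrow> bool" where
  "strategy_I \<sigma> \<longleftrightarrow> (\<forall>s. \<sigma> s \<in> V1)"

definition follows :: "('a list \<Rightarrow> 'a set) \<Rightarrow> (nat \<Rightarrow> 'a) \<Rightarrow> bool" where
  "follows \<sigma> a \<longleftrightarrow> (\<forall>n. a n \<in> \<sigma> (map a [0..<n]))"

definition winning_strategy_I :: "('a::bounded_lattice list \<Rightarrow> 'a set) \<Rightarrow> bool" where
  "winning_strategy_I \<sigma> \<longleftrightarrow> strategy_I \<sigma> \<and>
     (\<forall>a. follows \<sigma> a \<longrightarrow> \<not> is_sup (range a) top)"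

end

theory Submission
  imports Defs "HOL-Library.Nat_Bijection" "HOL-Library.Infinite_Set"
begin

text \<open>
  In a lattice with enough primes, the spectrum of \<open>x\<close>, the set of primes \<open>q\<close> with
  \<open>\<not> x \<le> q\<close>, determines \<open>x\<close>; it turns meets and joins into intersections and
  unions, and \<open>sup A = 1\<close> into ``the spectra of \<open>A\<close> cover the set of primes''. Only this
  half of the Pawlikowski hypothesis is needed: it reduces the theorem to Pawlikowski's theorem
  for a lattice \<open>T\<close> of subsets of a set \<open>X\<close> with the Rothberger property.

  Replacing every move of Player I by a countable subcover turns a strategy into a tree of covers
  \<open>V s k\<close>, indexed by finite sequences \<open>s\<close> of naturals, and it suffices to find a branch
  \<open>f\<close> whose sets \<open>V (map f [0..<n]) (f n)\<close> cover \<open>X\<close>. A first application of the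
  Rothberger property, to covers by the sets of points lying in a child \<open>\<le> K\<close> of every node
  of a finite part of the tree, yields a bound \<open>b\<close> such that every point lies, for infinitely
  many levels \<open>m\<close>, in a child \<open>\<le> b m\<close> of every node of level \<open>m\<close> of the
  \<open>b\<close>-bounded tree. A second one, to covers whose members fix such a child of every node on
  \<open>N + 1\<close> levels at once, selects children on \<open>N + 1\<close> levels for every \<open>N\<close>. Distinct
  levels \<open>\<beta> N\<close> can then be chosen greedily, and the branch that follows the \<open>N\<close>-th
  selection at level \<open>\<beta> N\<close> covers \<open>X\<close>.
\<close>

section \<open>Bounded parts of the tree of finite sequences\<close>

definition covered_within ::
  "(nat list \<Rightarrow> nat \<Rightarrow> 'x set) \<Rightarrow> nat list set \<Rightarrow> nat \<Rightarrow> 'x set" where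
  "covered_within V S K = (\<Inter>s\<in>S. \<Union>k\<le>K. V s k)"

definition nodes_upto :: "nat \<Rightarrow> nat list set" where
  "nodes_upto N = {s. length s \<le> N \<and> set s \<subseteq> {..N}}"

definition bounded_nodes :: "(nat \<Rightarrow> nat) \<Rightarrow> nat \<Rightarrow> nat list set" where
  "bounded_nodes b m = {s. length s = m \<and> (\<forall>i<m. s ! i \<le> b i)}"

lemma finite_nodes_upto: "finite (nodes_upto N)"
  unfolding nodes_upto_def using finite_lists_length_le[of "{..N}" N] by (simp add: conj_commute)

lemma Nil_in_nodes_upto: "[] \<in> nodes_upto N"
  by (simp add: nodes_upto_def)

lemma bounded_nodes_subset_nodes_upto:
  assumes "m \<le> N" "\<And>i. i < m \<Longrightarrow> b i \<le> N"
  shows "bounded_nodes b m \<subseteq> nodes_upto N"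
  using assms by (fastforce simp: bounded_nodes_def nodes_upto_def in_set_conv_nth)

lemma finite_bounded_nodes: "finite (bounded_nodes b m)"
proof (rule finite_subset)
  show "bounded_nodes b m \<subseteq> nodes_upto (m + (\<Sum>i<m. b i))"
    by (rule bounded_nodes_subset_nodes_upto) (auto intro: trans_le_add2 member_le_sum)
qed (rule finite_nodes_upto)

lemma replicate_in_bounded_nodes: "replicate m 0 \<in> bounded_nodes b m"
  by (simp add: bounded_nodes_def)

lemma map_upt_in_bounded_nodes_iff: "map f [0..<m] \<in> bounded_nodes b m \<longleftrightarrow> (\<forall>i<m. f i \<le> b i)"
  by (simp add: bounded_nodes_def)

lemma covered_within_antimono:
  "S \<subseteq> S' \<Longrightarrow> K \<le> K' \<Longrightarrow> covered_within V S' K \<subseteq> covered_within V S K'"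
  unfolding covered_within_def by fastforce

lemma covered_within_exists:
  assumes "finite S" "\<And>s. s \<in> S \<Longrightarrow> x \<in> (\<Union>k. V s k)"
  shows "\<exists>K. x \<in> covered_within V S K"
proof -
  define least where "least s = (LEAST k. x \<in> V s k)" for s
  have "x \<in> V s (least s)" if "s \<in> S" for s
    using assms(2)[OF that] unfolding least_def by (auto intro: LeastI)
  moreover obtain K where "least ` S \<subseteq> {..<K}"
    using finite_nat_bounded assms(1) by blast
  ultimately have "x \<in> covered_within V S K"
    unfolding covered_within_def by (fastforce intro: less_imp_le)
  then show ?thesis ..
qed

lemma exists_inj_choice:
  fixes M :: "nat \<Rightarrow> 'a set"
  assumes "\<And>N. N < card (M N)"
  obtains \<beta> where "inj \<beta>" "\<And>N. \<beta> N \<in> M N"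
proof -
  define pick where "pick N S = (SOME m. m \<in> M N \<and> m \<notin> S)" for N S
  define used where "used = rec_nat {} (\<lambda>N S. insert (pick N S) S)"
  define \<beta> where "\<beta> N = pick N (used N)" for N
  have used_Suc: "used (Suc N) = insert (\<beta> N) (used N)" for N
    by (simp add: used_def \<beta>_def)
  have used_finite: "finite (used N)" and used_card: "card (used N) \<le> N" for N
    by (induction N) (simp_all add: used_def card_insert_if)
  have "\<beta> N \<in> M N \<and> \<beta> N \<notin> used N" for N
  proof -
    have "\<not> M N \<subseteq> used N"
    proof
      assume "M N \<subseteq> used N"
      then have "card (M N) \<le> card (used N)"
        by (rule card_mono[OF used_finite])
      with used_card[of N] assms[of N] show False
        by simp
    qed
    then have "\<exists>m. m \<in> M N \<and> m \<notin> used N"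
      by blast
    then show ?thesis
      unfolding \<beta>_def pick_def by (rule someI_ex)
  qed
  then have \<beta>_in: "\<beta> N \<in> M N" and \<beta>_fresh: "\<beta> N \<notin> used N" for N by blast+
  have \<beta>_used: "\<beta> N' \<in> used N" if "N' < N" for N' N
    using that by (induction N) (auto simp: used_Suc less_Suc_eq)
  have "inj \<beta>"
    by (rule injI, rule ccontr) (metis \<beta>_fresh \<beta>_used linorder_neqE_nat)
  then show thesis
    using \<beta>_in that by blast
qed

lemma exists_branch_following_choices: "\<exists>f. \<forall>n. f n = c n (map f [0..<n])"
proof -
  define pre where "pre = rec_nat [] (\<lambda>n s. s @ [c n s])"
  define f where "f n = c n (pre n)" for n
  have "pre n = map f [0..<n]" for n
    by (induction n) (simp_all add: pre_def f_def)
  then have "\<forall>n. f n = c n (map f [0..<n])"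
    by (simp add: f_def)
  then show ?thesis by blast
qed

lemma strict_mono_bracket:
  fixes a :: "nat \<Rightarrow> nat"
  assumes "strict_mono a" "a 0 < n"
  obtains m where "a m < n" "n \<le> a (Suc m)"
proof -
  have "\<exists>m. a m < n \<and> n \<le> a (Suc m)"
  proof (rule ccontr)
    assume "\<nexists>m. a m < n \<and> n \<le> a (Suc m)"
    then have "a m < n" for m
      by (induction m) (use assms(2) in \<open>auto simp: not_le\<close>)
    then show False
      using strict_mono_imp_increasing[OF assms(1), of n] by (simp add: not_le[symmetric])
  qed
  then show thesis
    using that by blast
qed

lemma levelwise_bound_from_two_step_bounds:
  fixes V :: "nat list \<Rightarrow> nat \<Rightarrow> 'x set"
  assumes "\<forall>x\<in>X. infinite {n. x \<in> covered_within V (nodes_upto n) (K n) \<inter>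
    covered_within V (nodes_upto (K n)) (M n)}"
  shows "\<exists>b. \<forall>x\<in>X. infinite {m. x \<in> covered_within V (bounded_nodes b m) (b m)}"
proof -
  define h where "h n = Suc (n + (\<Sum>i\<le>n. M i))" for n
  define a where "a m = (h ^^ m) 0" for m
  define b where "b m = a (Suc m)" for m
  have a_Suc: "a (Suc m) = h (a m)" for m
    by (simp add: a_def)
  have "strict_mono a"
    unfolding strict_mono_Suc_iff a_Suc h_def by simp
  have M_le_h: "M n \<le> h n" for n
    unfolding h_def using member_le_sum[of n "{..n}" M] by simp
  have "mono h"
    unfolding h_def by (intro monoI Suc_le_mono[THEN iffD2] add_mono sum_mono2) auto
  have "\<exists>m\<ge>L. x \<in> covered_within V (bounded_nodes b m) (b m)" if "x \<in> X" for x L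
  proof -
    obtain n where n: "Suc (a L) \<le> n"
      and x_early: "x \<in> covered_within V (nodes_upto n) (K n)"
      and x_late: "x \<in> covered_within V (nodes_upto (K n)) (M n)"
      using assms \<open>x \<in> X\<close> unfolding infinite_nat_iff_unbounded_le by blast
    have "a 0 < n"
      using n strict_mono_less_eq[OF \<open>strict_mono a\<close>, of 0 L] by simp
    then obtain m where m: "a m < n" "n \<le> a (Suc m)"
      using strict_mono_bracket[OF \<open>strict_mono a\<close>] by blast
    have "L \<le> m"
      using n m(2) strict_mono_less[OF \<open>strict_mono a\<close>, of L "Suc m"] by simp
    have a_le: "a i \<le> a j" if "i \<le> j" for i j
      using that strict_mono_less_eq[OF \<open>strict_mono a\<close>] by blast
    \<comment> \<open>Either \<open>K n\<close> is already below \<open>b m\<close>, or the nodes of level \<open>m + 1\<close> are in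
      \<open>nodes_upto (K n)\<close> and the second bound \<open>M n \<le> h n\<close> is below \<open>b (m + 1)\<close>.\<close>
    show ?thesis
    proof (cases "K n \<le> b m")
      case True
      have "b i \<le> n" if "i < m" for i
        using a_le[of "Suc i" m] that m(1) by (simp add: b_def)
      then have "bounded_nodes b m \<subseteq> nodes_upto n"
        using m(1) strict_mono_imp_increasing[OF \<open>strict_mono a\<close>, of m]
        by (intro bounded_nodes_subset_nodes_upto) auto
      then have "x \<in> covered_within V (bounded_nodes b m) (b m)"
        by (rule subsetD[OF covered_within_antimono[OF _ True] x_early])
      with \<open>L \<le> m\<close> show ?thesis
        by blast
    next
      case False
      have "b i \<le> K n" if "i < Suc m" for i
        using a_le[of "Suc i" "Suc m"] that False by (simp add: b_def)
      then have nodes: "bounded_nodes b (Suc m) \<subseteq> nodes_upto (K n)"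
        using False strict_mono_imp_increasing[OF \<open>strict_mono a\<close>, of "Suc m"]
        by (intro bounded_nodes_subset_nodes_upto) (auto simp: b_def)
      have bound: "M n \<le> b (Suc m)"
        using M_le_h[of n] monoD[OF \<open>mono h\<close> m(2)] by (simp add: b_def a_Suc)
      have "x \<in> covered_within V (bounded_nodes b (Suc m)) (b (Suc m))"
        by (rule subsetD[OF covered_within_antimono[OF nodes bound] x_late])
      with \<open>L \<le> m\<close> show ?thesis
        using le_SucI by blast
    qed
  qed
  then show ?thesis
    unfolding infinite_nat_iff_unbounded_le by blast
qed

lemma branch_through_selectors:
  assumes "\<And>N. N < card (M N)"
    and g_bound: "\<And>N m s. m \<in> M N \<Longrightarrow> s \<in> bounded_nodes b m \<Longrightarrow> g N s \<le> b m"
  obtains f \<beta> where "\<And>N. \<beta> N \<in> M N" "\<And>N. f (\<beta> N) = g N (map f [0..<\<beta> N])" "\<And>i. f i \<le> b i"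
proof -
  obtain \<beta> where "inj \<beta>" and \<beta>_in: "\<And>N. \<beta> N \<in> M N"
    using exists_inj_choice assms(1) by blast
  define c where "c i s = (if i \<in> range \<beta> then g (inv \<beta> i) s else 0)" for i s
  obtain f where f: "\<And>n. f n = c n (map f [0..<n])"
    using exists_branch_following_choices by metis
  have f_\<beta>: "f (\<beta> N) = g N (map f [0..<\<beta> N])" for N
    using f[of "\<beta> N"] by (simp add: c_def inv_f_f[OF \<open>inj \<beta>\<close>])
  have "f i \<le> b i" for i
  proof (induction i rule: less_induct)
    case (less i)
    then have prefix: "map f [0..<i] \<in> bounded_nodes b i"
      by (simp add: map_upt_in_bounded_nodes_iff)
    show ?case
    proof (cases "i \<in> range \<beta>")
      case True
      then obtain N where "i = \<beta> N"
        by blast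
      then show ?thesis
        using f_\<beta>[of N] g_bound[OF \<beta>_in prefix[unfolded \<open>i = \<beta> N\<close>]] by simp
    next
      case False
      then show ?thesis
        using f[of i] by (simp add: c_def)
    qed
  qed
  with \<beta>_in f_\<beta> show thesis
    using that by blast
qed

section \<open>Rothberger lattices of sets\<close>

definition cover_by :: "'x set set \<Rightarrow> 'x set \<Rightarrow> 'x set set \<Rightarrow> bool" where
  "cover_by T X \<U> \<longleftrightarrow> \<U> \<subseteq> T \<and> X \<subseteq> \<Union>\<U>"

definition level_selections ::
  "(nat list \<Rightarrow> nat \<Rightarrow> 'x set) \<Rightarrow> (nat \<Rightarrow> nat) \<Rightarrow> nat \<Rightarrow> 'x set set" where
  "level_selections V b N = {\<Inter>m\<in>M. \<Inter>s\<in>bounded_nodes b m. V s (g s) | M g.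
     card M = Suc N \<and> (\<forall>m\<in>M. \<forall>s\<in>bounded_nodes b m. g s \<le> b m)}"

locale rothberger_lattice_of_sets =
  fixes X :: "'x set" and T :: "'x set set"
  assumes Int_closed: "U \<in> T \<Longrightarrow> U' \<in> T \<Longrightarrow> U \<inter> U' \<in> T"
    and Un_closed: "U \<in> T \<Longrightarrow> U' \<in> T \<Longrightarrow> U \<union> U' \<in> T"
    and rothberger:
      "(\<And>n::nat. cover_by T X (\<U> n)) \<Longrightarrow> \<exists>U. (\<forall>n. U n \<in> \<U> n) \<and> X \<subseteq> (\<Union>n. U n)"
begin

lemma INT_closed:
  "finite I \<Longrightarrow> I \<noteq> {} \<Longrightarrow> (\<And>i. i \<in> I \<Longrightarrow> F i \<in> T) \<Longrightarrow> (\<Inter>i\<in>I. F i) \<in> T"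
  by (induction I rule: finite_ne_induct) (auto intro: Int_closed)

lemma UN_closed:
  "finite I \<Longrightarrow> I \<noteq> {} \<Longrightarrow> (\<And>i. i \<in> I \<Longrightarrow> F i \<in> T) \<Longrightarrow> (\<Union>i\<in>I. F i) \<in> T"
  by (induction I rule: finite_ne_induct) (auto intro: Un_closed)

lemma covered_within_closed:
  assumes "finite S" "S \<noteq> {}" "\<And>s k. V s k \<in> T"
  shows "covered_within V S K \<in> T"
  unfolding covered_within_def
  by (rule INT_closed[OF assms(1,2) UN_closed]) (simp_all add: assms(3))

lemma countable_subcover:
  assumes "cover_by T X \<U>"
  shows "\<exists>e :: nat \<Rightarrow> 'x set. range e \<subseteq> \<U> \<and> X \<subseteq> (\<Union>k. e k)"
  using rothberger[of "\<lambda>_. \<U>"] assms by blast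

lemma rothberger_infinitely_often:
  assumes "\<And>n::nat. cover_by T X (\<U> n)"
  shows "\<exists>U. (\<forall>n. U n \<in> \<U> n) \<and> (\<forall>x\<in>X. infinite {n. x \<in> U n})"
proof -
  have "\<exists>U. (\<forall>j. U j \<in> \<U> (prod_encode (i, j))) \<and> X \<subseteq> (\<Union>j. U j)" for i
    using rothberger[of "\<lambda>j. \<U> (prod_encode (i, j))"] assms by blast
  then obtain sel where sel_in: "\<And>i j. sel i j \<in> \<U> (prod_encode (i, j))"
    and sel_cover: "\<And>i. X \<subseteq> (\<Union>j. sel i j)"
    by metis
  define U where "U n = sel (fst (prod_decode n)) (snd (prod_decode n))" for n
  have U_encode: "U (prod_encode (i, j)) = sel i j" for i j
    by (simp add: U_def)
  have "U n \<in> \<U> n" for n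
    using sel_in[of "fst (prod_decode n)" "snd (prod_decode n)"] by (simp add: U_def)
  moreover have "infinite {n. x \<in> U n}" if "x \<in> X" for x
    unfolding infinite_nat_iff_unbounded_le
  proof
    fix L
    obtain j where "x \<in> sel L j"
      using sel_cover \<open>x \<in> X\<close> by blast
    then show "\<exists>n\<ge>L. n \<in> {n. x \<in> U n}"
      by (intro exI[of _ "prod_encode (L, j)"]) (simp add: U_encode le_prod_encode_1)
  qed
  ultimately show ?thesis
    by blast
qed

lemma exists_two_step_bounds:
  assumes V_in: "\<And>s k. V s k \<in> T" and V_cover: "\<And>s. X \<subseteq> (\<Union>k. V s k)"
  shows "\<exists>K M. \<forall>x\<in>X. infinite {n. x \<in> covered_within V (nodes_upto n) (K n) \<inter>
    covered_within V (nodes_upto (K n)) (M n)}"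
proof -
  define \<A> where
    "\<A> n = {covered_within V (nodes_upto n) K \<inter> covered_within V (nodes_upto K) M | K M. True}" for n
  have "cover_by T X (\<A> n)" for n
    unfolding cover_by_def
  proof
    have "covered_within V (nodes_upto N) K \<in> T" for N K
      using covered_within_closed[of "nodes_upto N" V K] finite_nodes_upto Nil_in_nodes_upto V_in
      by blast
    then show "\<A> n \<subseteq> T"
      unfolding \<A>_def by (auto intro: Int_closed)
    show "X \<subseteq> \<Union>(\<A> n)"
    proof
      fix x assume "x \<in> X"
      then have "x \<in> (\<Union>k. V s k)" for s
        using V_cover by blast
      then obtain K M where "x \<in> covered_within V (nodes_upto n) K" "x \<in> covered_within V (nodes_upto K) M"
        using covered_within_exists[OF finite_nodes_upto] by metis
      then show "x \<in> \<Union>(\<A> n)"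
        unfolding \<A>_def by blast
    qed
  qed
  then obtain U where U_in: "\<forall>n. U n \<in> \<A> n" and U_often: "\<forall>x\<in>X. infinite {n. x \<in> U n}"
    using rothberger_infinitely_often by blast
  then have "\<forall>n. \<exists>K M. U n = covered_within V (nodes_upto n) K \<inter> covered_within V (nodes_upto K) M"
    unfolding \<A>_def by blast
  then obtain K M where KM:
      "\<And>n. U n = covered_within V (nodes_upto n) (K n) \<inter> covered_within V (nodes_upto (K n)) (M n)"
    by metis
  have "\<forall>x\<in>X. infinite {n. x \<in> covered_within V (nodes_upto n) (K n) \<inter>
    covered_within V (nodes_upto (K n)) (M n)}"
    using U_often by (simp only: KM)
  then show ?thesis
    by (intro exI)
qed

lemma level_selections_cover:
  assumes V_in: "\<And>s k. V s k \<in> T"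
    and levels: "\<forall>x\<in>X. infinite {m. x \<in> covered_within V (bounded_nodes b m) (b m)}"
  shows "cover_by T X (level_selections V b N)"
  unfolding cover_by_def
proof
  have "(\<Inter>m\<in>M. \<Inter>s\<in>bounded_nodes b m. V s (g s)) \<in> T" if "card M = Suc N" for M g
  proof (rule INT_closed[OF _ _ INT_closed])
    show "finite M" "M \<noteq> {}"
      using that card.infinite by fastforce+
  qed (use finite_bounded_nodes replicate_in_bounded_nodes V_in in blast)+
  then show "level_selections V b N \<subseteq> T"
    unfolding level_selections_def by blast
next
  show "X \<subseteq> \<Union>(level_selections V b N)"
  proof
    fix x assume "x \<in> X"
    then obtain M where M: "M \<subseteq> {m. x \<in> covered_within V (bounded_nodes b m) (b m)}" "card M = Suc N"
      using infinite_arbitrarily_large levels by blast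
    define g where "g s = (LEAST k. x \<in> V s k)" for s
    have g_le: "g s \<le> b m" and x_in: "x \<in> V s (g s)" if "m \<in> M" "s \<in> bounded_nodes b m" for m s
    proof -
      have "x \<in> covered_within V (bounded_nodes b m) (b m)"
        using M(1) \<open>m \<in> M\<close> by blast
      then obtain k where "k \<le> b m" "x \<in> V s k"
        using \<open>s \<in> bounded_nodes b m\<close> unfolding covered_within_def by blast
      moreover have "g s \<le> k" and "x \<in> V s (g s)"
        unfolding g_def using \<open>x \<in> V s k\<close> by (rule Least_le, rule LeastI)
      ultimately show "g s \<le> b m" "x \<in> V s (g s)"
        by simp_all
    qed
    have "(\<Inter>m\<in>M. \<Inter>s\<in>bounded_nodes b m. V s (g s)) \<in> level_selections V b N"
      unfolding level_selections_def using M(2) g_le by (intro CollectI exI[of _ M] exI[of _ g]) simp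
    moreover have "x \<in> (\<Inter>m\<in>M. \<Inter>s\<in>bounded_nodes b m. V s (g s))"
      using x_in by blast
    ultimately show "x \<in> \<Union>(level_selections V b N)"
      by (rule UnionI)
  qed
qed

lemma covering_branch_from_levels:
  assumes V_in: "\<And>s k. V s k \<in> T"
    and levels: "\<forall>x\<in>X. infinite {m. x \<in> covered_within V (bounded_nodes b m) (b m)}"
  shows "\<exists>f. X \<subseteq> (\<Union>n. V (map f [0..<n]) (f n))"
proof -
  obtain W where W_in: "\<forall>N. W N \<in> level_selections V b N"
    and W_cover: "X \<subseteq> (\<Union>N. W N)"
    using rothberger[of "level_selections V b"] level_selections_cover[OF V_in levels] by blast
  then have "\<forall>N. \<exists>M g. W N = (\<Inter>m\<in>M. \<Inter>s\<in>bounded_nodes b m. V s (g s)) \<and>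
      card M = Suc N \<and> (\<forall>m\<in>M. \<forall>s\<in>bounded_nodes b m. g s \<le> b m)"
    unfolding level_selections_def by blast
  then obtain M g where W_eq: "\<And>N. W N = (\<Inter>m\<in>M N. \<Inter>s\<in>bounded_nodes b m. V s (g N s))"
    and M_card: "\<And>N. card (M N) = Suc N"
    and g_bound: "\<And>N m s. m \<in> M N \<Longrightarrow> s \<in> bounded_nodes b m \<Longrightarrow> g N s \<le> b m"
    by metis
  obtain f \<beta> where \<beta>_in: "\<And>N. \<beta> N \<in> M N"
    and f_\<beta>: "\<And>N. f (\<beta> N) = g N (map f [0..<\<beta> N])" and f_bound: "\<And>i. f i \<le> b i"
    using branch_through_selectors[of M b g] M_card g_bound by (metis lessI)
  have "x \<in> (\<Union>n. V (map f [0..<n]) (f n))" if "x \<in> X" for x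
  proof -
    obtain N where "x \<in> W N"
      using W_cover \<open>x \<in> X\<close> by blast
    moreover have "map f [0..<\<beta> N] \<in> bounded_nodes b (\<beta> N)"
      using f_bound by (simp add: map_upt_in_bounded_nodes_iff)
    ultimately have "x \<in> V (map f [0..<\<beta> N]) (f (\<beta> N))"
      unfolding W_eq f_\<beta> using \<beta>_in by blast
    then show ?thesis
      by blast
  qed
  then show ?thesis
    by blast
qed

theorem exists_covering_branch:
  fixes V :: "nat list \<Rightarrow> nat \<Rightarrow> 'x set"
  assumes V_in: "\<And>s k. V s k \<in> T" and V_cover: "\<And>s. X \<subseteq> (\<Union>k. V s k)"
  shows "\<exists>f. X \<subseteq> (\<Union>n. V (map f [0..<n]) (f n))"
proof -
  obtain K M where "\<forall>x\<in>X. infinite {n. x \<in> covered_within V (nodes_upto n) (K n) \<inter>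
    covered_within V (nodes_upto (K n)) (M n)}"
    using exists_two_step_bounds[of V, OF V_in V_cover] by blast
  then obtain b where "\<forall>x\<in>X. infinite {m. x \<in> covered_within V (bounded_nodes b m) (b m)}"
    using levelwise_bound_from_two_step_bounds by blast
  then show ?thesis
    by (rule covering_branch_from_levels[OF V_in])
qed

theorem exists_covering_play:
  assumes "\<And>p. cover_by T X (\<tau> p)"
  shows "\<exists>U. follows \<tau> U \<and> X \<subseteq> (\<Union>n. U n)"
proof -
  have "\<forall>p. \<exists>e :: nat \<Rightarrow> 'x set. range e \<subseteq> \<tau> p \<and> X \<subseteq> (\<Union>k. e k)"
    using countable_subcover assms by blast
  then obtain e :: "'x set list \<Rightarrow> nat \<Rightarrow> 'x set"
    where e_in: "\<And>p. range (e p) \<subseteq> \<tau> p" and e_cover: "\<And>p. X \<subseteq> (\<Union>k. e p k)"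
    by metis
  \<comment> \<open>the position reached when Player II answers with the indices listed in \<open>s\<close>\<close>
  define pos where "pos s = fold (\<lambda>k p. p @ [e p k]) s []" for s
  define V where "V s k = e (pos s) k" for s k
  have \<tau>_sub: "\<tau> p \<subseteq> T" for p
    using assms[of p] by (simp add: cover_by_def)
  have V_in: "V s k \<in> T" for s k
    using e_in[of "pos s"] \<tau>_sub[of "pos s"] unfolding V_def by blast
  have V_cover: "X \<subseteq> (\<Union>k. V s k)" for s
    unfolding V_def by (rule e_cover)
  obtain f where f_cover: "X \<subseteq> (\<Union>n. V (map f [0..<n]) (f n))"
    using exists_covering_branch[of V, OF V_in V_cover] by blast
  define U where "U n = V (map f [0..<n]) (f n)" for n
  have pos_U: "pos (map f [0..<n]) = map U [0..<n]" for n
    by (induction n) (simp_all add: pos_def U_def V_def)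
  have "follows \<tau> U"
    unfolding follows_def
  proof
    fix n
    have "U n \<in> \<tau> (pos (map f [0..<n]))"
      using e_in unfolding U_def V_def by blast
    then show "U n \<in> \<tau> (map U [0..<n])"
      by (simp only: pos_U)
  qed
  with f_cover show ?thesis
    unfolding U_def by blast
qed

end

section \<open>The spectrum of a lattice with enough primes\<close>

definition spectrum :: "'a::bounded_lattice \<Rightarrow> 'a set" where
  "spectrum x = {q. prime_elem q \<and> \<not> x \<le> q}"

lemma spectrum_inf: "spectrum (inf x y) = spectrum x \<inter> spectrum y"
  unfolding spectrum_def prime_elem_def by (auto intro: le_infI1 le_infI2)

lemma spectrum_sup: "spectrum (sup x y) = spectrum x \<union> spectrum y"
  unfolding spectrum_def by auto

lemma is_sup_top_iff_spectrum_cover: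
  fixes A :: "'a::bounded_lattice set"
  assumes "enough_primes TYPE('a)"
  shows "is_sup A top \<longleftrightarrow> {q. prime_elem q} \<subseteq> (\<Union>a\<in>A. spectrum a)"
proof
  assume "is_sup A top"
  show "{q. prime_elem q} \<subseteq> (\<Union>a\<in>A. spectrum a)"
  proof
    fix q :: 'a assume "q \<in> {q. prime_elem q}"
    then have "\<not> top \<le> q"
      by (simp add: prime_elem_def top_unique)
    with \<open>is_sup A top\<close> obtain a where "a \<in> A" "\<not> a \<le> q"
      unfolding is_sup_def by blast
    with \<open>q \<in> {q. prime_elem q}\<close> show "q \<in> (\<Union>a\<in>A. spectrum a)"
      unfolding spectrum_def by blast
  qed
next
  assume cover: "{q. prime_elem q} \<subseteq> (\<Union>a\<in>A. spectrum a)"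
  have "top \<le> u" if upper: "\<forall>a\<in>A. a \<le> u" for u
  proof (rule ccontr)
    assume "\<not> top \<le> u"
    then obtain q where "prime_elem q" "u \<le> q" "\<not> top \<le> q"
      using assms unfolding enough_primes_def by blast
    with cover obtain a where "a \<in> A" "\<not> a \<le> q"
      unfolding spectrum_def by blast
    with upper \<open>u \<le> q\<close> show False
      using order_trans by blast
  qed
  then show "is_sup A top"
    unfolding is_sup_def by simp
qed

lemma inj_spectrum:
  assumes "enough_primes TYPE('a::bounded_lattice)"
  shows "inj (spectrum :: 'a \<Rightarrow> 'a set)"
proof (rule injI)
  have le: "x \<le> y" if "spectrum x = spectrum y" for x y :: 'a
  proof (rule ccontr)
    assume "\<not> x \<le> y"
    then obtain q where "prime_elem q" "y \<le> q" "\<not> x \<le> q"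
      using assms unfolding enough_primes_def by blast
    with that show False
      unfolding spectrum_def by blast
  qed
  show "x = y" if "spectrum x = spectrum y" for x y :: 'a
    using le[OF that] le[OF that[symmetric]] by (rule order.antisym)
qed

lemma rothberger_spectrum:
  assumes ep: "enough_primes TYPE('a::bounded_lattice)" and S1: "S1_V1_V1 TYPE('a)"
  shows "rothberger_lattice_of_sets {q::'a. prime_elem q} (range spectrum)"
proof
  show "U \<inter> U' \<in> range spectrum" and "U \<union> U' \<in> range spectrum"
    if "U \<in> range spectrum" "U' \<in> range spectrum" for U U' :: "'a set"
    using that by (auto simp flip: spectrum_inf spectrum_sup)
next
  fix \<U> :: "nat \<Rightarrow> 'a set set"
  assume covers: "\<And>n. cover_by (range spectrum) {q. prime_elem q} (\<U> n)"
  define A where "A n = spectrum -` \<U> n" for n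
  have spectrum_A: "spectrum ` A n = \<U> n" for n
    using covers[of n] unfolding A_def cover_by_def by blast
  have "A n \<in> V1" for n
    using covers[of n] unfolding V1_def is_sup_top_iff_spectrum_cover[OF ep] cover_by_def
    by (simp add: spectrum_A)
  then obtain a where a_in: "\<And>n. a n \<in> A n" and "is_sup (range a) top"
    using S1 unfolding S1_V1_V1_def by blast
  then have "{q. prime_elem q} \<subseteq> (\<Union>n. spectrum (a n))"
    unfolding is_sup_top_iff_spectrum_cover[OF ep] by simp
  moreover have "spectrum (a n) \<in> \<U> n" for n
    using a_in[of n] unfolding A_def by simp
  ultimately show "\<exists>U. (\<forall>n. U n \<in> \<U> n) \<and> {q. prime_elem q} \<subseteq> (\<Union>n. U n)"
    by (intro exI[of _ "\<lambda>n. spectrum (a n)"]) blast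
qed

lemma strategy_I_admits_play_with_sup_top:
  fixes \<sigma> :: "'a::bounded_lattice list \<Rightarrow> 'a set"
  assumes ep: "enough_primes TYPE('a)" and S1: "S1_V1_V1 TYPE('a)" and "strategy_I \<sigma>"
  shows "\<exists>a. follows \<sigma> a \<and> is_sup (range a) top"
proof -
  interpret rothberger_lattice_of_sets "{q::'a. prime_elem q}" "range spectrum"
    using rothberger_spectrum[OF ep S1] .
  define \<tau> where "\<tau> p = spectrum ` \<sigma> (map (inv spectrum) p)" for p
  have "cover_by (range spectrum) {q. prime_elem q} (\<tau> p)" for p
    using \<open>strategy_I \<sigma>\<close> unfolding \<tau>_def cover_by_def strategy_I_def V1_def
      is_sup_top_iff_spectrum_cover[OF ep] by blast
  then obtain U where "follows \<tau> U" and U_cover: "{q. prime_elem q} \<subseteq> (\<Union>n. U n)"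
    using exists_covering_play by blast
  define a where "a n = inv spectrum (U n)" for n
  have "a n \<in> \<sigma> (map a [0..<n]) \<and> spectrum (a n) = U n" for n
  proof -
    have "U n \<in> spectrum ` \<sigma> (map a [0..<n])"
      using \<open>follows \<tau> U\<close> unfolding follows_def \<tau>_def a_def by (simp add: comp_def)
    then obtain y where "y \<in> \<sigma> (map a [0..<n])" "U n = spectrum y"
      by blast
    then show ?thesis
      unfolding a_def using inv_f_f[OF inj_spectrum[OF ep]] by simp
  qed
  then have "follows \<sigma> a" and "is_sup (range a) top"
    unfolding follows_def is_sup_top_iff_spectrum_cover[OF ep] using U_cover by auto
  then show ?thesis
    by blast
qed

theorem theorem2p4:
  assumes "pawlikowski TYPE('a::bounded_lattice)"
    and "S1_V1_V1 TYPE('a)"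
  shows "\<not> (\<exists>\<sigma> :: 'a list \<Rightarrow> 'a set. winning_strategy_I \<sigma>)"
proof
  assume "\<exists>\<sigma> :: 'a list \<Rightarrow> 'a set. winning_strategy_I \<sigma>"
  then obtain \<sigma> :: "'a list \<Rightarrow> 'a set" where winning: "winning_strategy_I \<sigma>"
    by blast
  have "enough_primes TYPE('a)"
    using assms(1) unfolding pawlikowski_def by blast
  then obtain a where "follows \<sigma> a" "is_sup (range a) top"
    using strategy_I_admits_play_with_sup_top assms(2) winning
    unfolding winning_strategy_I_def by blast
  with winning show False
    unfolding winning_strategy_I_def by blast
qed

end
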